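(* (i) For every context $\Gamma$: if $\Gamma\ \mathrm{ok}_s$ then $\Gamma\ \mathrm{ok}$. (ii) For every context $\Gamma$ and terms $M,A$: if $\Gamma\vdash_s M:A$ then $\Gamma\vdash M:A$.
   Context: Let $\mathcal V$ (the variables) be a type with decidable equality, equipped with functions $\mathrm{encode}:\mathcal V\to\mathbb N$ and $\mathrm{decode}:\mathbb N\to\mathcal V$ such that $\mathrm{encode}(\mathrm{decode}\,n)=n$ for all $n$. Let $\mathcal C$ (the constants) be any type. Terms $\Lambda$ are generated by: $c\,k$ ($k\in\mathcal C$), $v\,x$ ($x\in\mathcal V$), $\lambda[x:A]M$, $\Pi[x:A]B$ and $M\cdot N$; in $\lambda[x:A]M$ and $\Pi[x:A]B$ the name $x$ binds in $M$ (resp. $B$) but not in $A$. Terms are raw first-order syntax (not identified up to renaming of bound variables) and $\equiv$ denotes syntactic identity. The list of free variables is $\mathrm{fv}(c\,k)=[\,]$, $\mathrm{fv}(v\,x)=[x]$, $\mathrm{fv}(\lambda[x:A]M)=\mathrm{fv}\,A\mathbin{+\!\!+}(\mathrm{fv}\,M-x)$, $\mathrm{fv}(\Pi[x:A]B)=\mathrm{fv}\,A\mathbin{+\!\!+}(\mathrm{fv}\,B-x)$, $\mathrm{fv}(M\cdot N)=\mathrm{fv}\,M\mathbin{+\!\!+}\mathrm{fv}\,N$, where $\mathbin{+\!\!+}$ is list concatenation and $xs-x$ deletes every occurrence of $x$ from $xs$. Fix a function $\chi':\mathrm{List}\,\mathbb N\to\mathbb N$ with $\chi'(ns)\notin ns$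 for every list $ns$, and put $X'(xs)=\mathrm{decode}(\chi'(\mathrm{map}\ \mathrm{encode}\ xs))$. A substitution is any function $\sigma:\mathcal V\to\Lambda$; $\iota=v$ is the identity substitution; $(\sigma,x:=N)(y)=N$ if $y=x$ and $\sigma\,y$ otherwise. For a substitution $\sigma$ and a list $xs$ of variables, $X(\sigma,xs)=X'(\text{concatenation of the lists }\mathrm{fv}(\sigma\,y)\text{ for }y\in xs)$. The action $M\bullet\sigma$ is defined by structural recursion: $c\,k\bullet\sigma=c\,k$; $v\,x\bullet\sigma=\sigma\,x$; $(M\cdot N)\bullet\sigma=(M\bullet\sigma)\cdot(N\bullet\sigma)$; $(\lambda[x:A]M)\bullet\sigma=\lambda[y:A\bullet\sigma](M\bullet(\sigma,x:=v\,y))$ with $y=X(\sigma,\mathrm{fv}\,M-x)$; $(\Pi[x:A]B)\bullet\sigma=\Pi[y:A\bullet\sigma](B\bullet(\sigma,x:=v\,y))$ with $y=X(\sigma,\mathrm{fv}\,B-x)$. Unary substitution is $M[x:=N]=M\bullet(\iota,x:=N)$. $\alpha$-conversion $\sim_\alpha$ is the inductively defined relation with rules: $c\,k\sim_\alpha c\,k$; $v\,x\sim_\alpha v\,x$; $M\cdot N\sim_\alpha M'\cdot N'$ if $M\sim_\alpha M'$ and $N\sim_\alpha N'$; $\lambda[x:A]M\sim_\alpha\lambda[x':A']M'$ if $A\sim_\alpha A'$ and there is a variable $y$ with $y\notin\mathrm{fv}\,M-x$, $y\notin\mathrm{fv}\,M'-x'$ and $M[x:=v\,y]\equiv M'[x':=v\,y]$;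 and the same rule with $\Pi$ in place of $\lambda$. $\beta$-contraction is $(\lambda[x:A]M)\cdot N\ \triangleright_\beta\ M[x:=N]$. One-step $\beta$-reduction $\to_\beta$ is its contextual closure, inductively: $M\to_\beta N$ if $M\triangleright_\beta N$; $\lambda[x:A]M\to_\beta\lambda[x:A]M'$ and $\Pi[x:A]M\to_\beta\Pi[x:A]M'$ if $M\to_\beta M'$; $\lambda[x:A]M\to_\beta\lambda[x:A']M$ and $\Pi[x:A]M\to_\beta\Pi[x:A']M$ if $A\to_\beta A'$; $M\cdot P\to_\beta N\cdot P$ and $P\cdot M\to_\beta P\cdot N$ if $M\to_\beta N$. $\beta$-conversion $\simeq_\beta$ is the equivalence (reflexive–symmetric–transitive) closure of $\sim_\alpha\cup\to_\beta$. Pure Type System: fix a binary relation $\mathcal A\subseteq\mathcal C\times\mathcal C$ (axioms) and a ternary relation $\mathcal R\subseteq\mathcal C\times\mathcal C\times\mathcal C$ (rules). A context is a finite list of pairs $(x,A)$ with $x\in\mathcal V$, $A\in\Lambda$; $\Gamma,x:A$ denotes the list $(x,A)::\Gamma$; $\mathrm{dom}\,\Gamma$ is the list of first components; $(x,A)\in\Gamma$ is list membership. The judgments $\Gamma\ \mathrm{ok}$ and $\Gamma\vdash M:A$ are defined mutually inductively by: (nil) $[\,]\ \mathrm{ok}$; (cons) if $\Gamma\ \mathrm{ok}$, $\Gamma\vdash A:c\,s$ and $x\notin\mathrm{dom}\,\Gamma$ then $\Gamma,x:A\ \mathrm{ok}$; (sort) if $\Gamma\ \mathrm{ok}$ and $\mathcal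 A\,s_1\,s_2$ then $\Gamma\vdash c\,s_1:c\,s_2$; (var) if $\Gamma\ \mathrm{ok}$ and $(x,A)\in\Gamma$ then $\Gamma\vdash v\,x:A$; (prod) if $\mathcal R\,s_1\,s_2\,s_3$, $\Gamma\vdash A:c\,s_1$ and for every $y\notin\mathrm{dom}\,\Gamma$, $\Gamma,y:A\vdash B[x:=v\,y]:c\,s_2$, then $\Gamma\vdash\Pi[x:A]B:c\,s_3$; (abs) if $\mathcal R\,s_1\,s_2\,s_3$, $\Gamma\vdash A:c\,s_1$, for every $z\notin\mathrm{dom}\,\Gamma$, $\Gamma,z:A\vdash B[y:=v\,z]:c\,s_2$, and for every $z\notin\mathrm{dom}\,\Gamma$, $\Gamma,z:A\vdash M[x:=v\,z]:B[y:=v\,z]$, then $\Gamma\vdash\lambda[x:A]M:\Pi[y:A]B$; (app) if $\Gamma\vdash M:\Pi[x:A]B$, $\Gamma\vdash N:A$ and $\Gamma\vdash B[x:=N]:c\,s$ for some $s$, then $\Gamma\vdash M\cdot N:B[x:=N]$; (conv) if $\Gamma\vdash M:A$, $A\simeq_\beta B$ and $\Gamma\vdash B:c\,s$ for some $s$, then $\Gamma\vdash M:B$. (The premises quantified over all fresh names in (prod) and (abs) are infinitely branching.) Finitary (standard) presentation: the judgments $\Gamma\ \mathrm{ok}_s$ and $\Gamma\vdash_s M:A$ are defined mutually inductively by: (nil) $[\,]\ \mathrm{ok}_s$; (cons) if $\Gamma\ \mathrm{ok}_s$, $\Gamma\vdash_s A:c\,s$ and $x\notin\mathrm{dom}\,\Gamma$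 then $\Gamma,x:A\ \mathrm{ok}_s$; (sort) if $\Gamma\ \mathrm{ok}_s$ and $\mathcal A\,s_1\,s_2$ then $\Gamma\vdash_s c\,s_1:c\,s_2$; (var) if $\Gamma\ \mathrm{ok}_s$ and $(x,A)\in\Gamma$ then $\Gamma\vdash_s v\,x:A$; (prod) if $\mathcal R\,s_1\,s_2\,s_3$, $y\notin\mathrm{fv}\,B-x$, $\Gamma\vdash_s A:c\,s_1$ and $\Gamma,y:A\vdash_s B[x:=v\,y]:c\,s_2$, then $\Gamma\vdash_s\Pi[x:A]B:c\,s_3$; (abs) if $\mathcal R\,s_1\,s_2\,s_3$, $z\notin\mathrm{fv}\,M-x$, $z\notin\mathrm{fv}\,B-y$, $\Gamma\vdash_s A:c\,s_1$, $\Gamma,z:A\vdash_s B[y:=v\,z]:c\,s_2$ and $\Gamma,z:A\vdash_s M[x:=v\,z]:B[y:=v\,z]$, then $\Gamma\vdash_s\lambda[x:A]M:\Pi[y:A]B$; (app) if $\Gamma\vdash_s M:\Pi[x:A]B$ and $\Gamma\vdash_s N:A$ then $\Gamma\vdash_s M\cdot N:B[x:=N]$; (conv) if $\Gamma\vdash_s M:A$, $A\simeq_\beta B$ and $\Gamma\vdash_s B:c\,s$ for some $s$, then $\Gamma\vdash_s M:B$. *)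

theory Defs
  imports Main
begin

datatype ('c, 'v) trm =
    Cst 'c
  | Var 'v
  | Lam 'v "('c, 'v) trm" "('c, 'v) trm"
  | Pi  'v "('c, 'v) trm" "('c, 'v) trm"
  | App "('c, 'v) trm" "('c, 'v) trm"

fun fv :: "('c, 'v) trm \<Rightarrow> 'v list" where
  "fv (Cst k) = []"
| "fv (Var x) = [x]"
| "fv (Lam x A M) = fv A @ removeAll x (fv M)"
| "fv (Pi x A B) = fv A @ removeAll x (fv B)"
| "fv (App M N) = fv M @ fv N"

definition Xp :: "('v \<Rightarrow> nat) \<Rightarrow> (nat \<Rightarrow> 'v) \<Rightarrow> (nat list \<Rightarrow> nat) \<Rightarrow> 'v list \<Rightarrow> 'v" where
  "Xp enc dec chi xs = dec (chi (map enc xs))"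

definition Xs :: "('v \<Rightarrow> nat) \<Rightarrow> (nat \<Rightarrow> 'v) \<Rightarrow> (nat list \<Rightarrow> nat) \<Rightarrow>
    ('v \<Rightarrow> ('c, 'v) trm) \<Rightarrow> 'v list \<Rightarrow> 'v" where
  "Xs enc dec chi \<sigma> xs = Xp enc dec chi (concat (map (\<lambda>y. fv (\<sigma> y)) xs))"

definition supd :: "('v \<Rightarrow> ('c, 'v) trm) \<Rightarrow> 'v \<Rightarrow> ('c, 'v) trm \<Rightarrow> 'v \<Rightarrow> ('c, 'v) trm" where
  "supd \<sigma> x N = (\<lambda>y. if y = x then N else \<sigma> y)"

primrec sact :: "('v \<Rightarrow> nat) \<Rightarrow> (nat \<Rightarrow> 'v) \<Rightarrow> (nat list \<Rightarrow> nat) \<Rightarrow>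
    ('c, 'v) trm \<Rightarrow> ('v \<Rightarrow> ('c, 'v) trm) \<Rightarrow> ('c, 'v) trm" where
  "sact enc dec chi (Cst k) \<sigma> = Cst k"
| "sact enc dec chi (Var x) \<sigma> = \<sigma> x"
| "sact enc dec chi (App M N) \<sigma> = App (sact enc dec chi M \<sigma>) (sact enc dec chi N \<sigma>)"
| "sact enc dec chi (Lam x A M) \<sigma> =
     (let y = Xs enc dec chi \<sigma> (removeAll x (fv M))
      in Lam y (sact enc dec chi A \<sigma>) (sact enc dec chi M (supd \<sigma> x (Var y))))"
| "sact enc dec chi (Pi x A B) \<sigma> =
     (let y = Xs enc dec chi \<sigma> (removeAll x (fv B))
      in Pi y (sact enc dec chi A \<sigma>) (sact enc dec chi B (supd \<sigma> x (Var y))))"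

definition usubst :: "('v \<Rightarrow> nat) \<Rightarrow> (nat \<Rightarrow> 'v) \<Rightarrow> (nat list \<Rightarrow> nat) \<Rightarrow>
    ('c, 'v) trm \<Rightarrow> 'v \<Rightarrow> ('c, 'v) trm \<Rightarrow> ('c, 'v) trm" where
  "usubst enc dec chi M x N = sact enc dec chi M (supd Var x N)"

inductive alpha :: "('v \<Rightarrow> nat) \<Rightarrow> (nat \<Rightarrow> 'v) \<Rightarrow> (nat list \<Rightarrow> nat) \<Rightarrow>
    ('c, 'v) trm \<Rightarrow> ('c, 'v) trm \<Rightarrow> bool"
  for enc dec chi where
  a_cst: "alpha enc dec chi (Cst k) (Cst k)"
| a_var: "alpha enc dec chi (Var x) (Var x)"
| a_app: "alpha enc dec chi M M' \<Longrightarrow> alpha enc dec chi N N' \<Longrightarrow>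
          alpha enc dec chi (App M N) (App M' N')"
| a_lam: "alpha enc dec chi A A' \<Longrightarrow> y \<notin> set (removeAll x (fv M)) \<Longrightarrow>
          y \<notin> set (removeAll x' (fv M')) \<Longrightarrow>
          usubst enc dec chi M x (Var y) = usubst enc dec chi M' x' (Var y) \<Longrightarrow>
          alpha enc dec chi (Lam x A M) (Lam x' A' M')"
| a_pi: "alpha enc dec chi A A' \<Longrightarrow> y \<notin> set (removeAll x (fv M)) \<Longrightarrow>
          y \<notin> set (removeAll x' (fv M')) \<Longrightarrow>
          usubst enc dec chi M x (Var y) = usubst enc dec chi M' x' (Var y) \<Longrightarrow>
          alpha enc dec chi (Pi x A M) (Pi x' A' M')"

inductive beta :: "('v \<Rightarrow> nat) \<Rightarrow> (nat \<Rightarrow> 'v) \<Rightarrow> (nat list \<Rightarrow> nat) \<Rightarrow>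
    ('c, 'v) trm \<Rightarrow> ('c, 'v) trm \<Rightarrow> bool"
  for enc dec chi where
  b_contr: "beta enc dec chi (App (Lam x A M) N) (usubst enc dec chi M x N)"
| b_lam_body: "beta enc dec chi M M' \<Longrightarrow> beta enc dec chi (Lam x A M) (Lam x A M')"
| b_pi_body: "beta enc dec chi M M' \<Longrightarrow> beta enc dec chi (Pi x A M) (Pi x A M')"
| b_lam_ty: "beta enc dec chi A A' \<Longrightarrow> beta enc dec chi (Lam x A M) (Lam x A' M)"
| b_pi_ty: "beta enc dec chi A A' \<Longrightarrow> beta enc dec chi (Pi x A M) (Pi x A' M)"
| b_app_l: "beta enc dec chi M N \<Longrightarrow> beta enc dec chi (App M P) (App N P)"
| b_app_r: "beta enc dec chi M N \<Longrightarrow> beta enc dec chi (App P M) (App P N)"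

definition betaconv :: "('v \<Rightarrow> nat) \<Rightarrow> (nat \<Rightarrow> 'v) \<Rightarrow> (nat list \<Rightarrow> nat) \<Rightarrow>
    ('c, 'v) trm \<Rightarrow> ('c, 'v) trm \<Rightarrow> bool" where
  "betaconv enc dec chi = equivclp (sup (alpha enc dec chi) (beta enc dec chi))"

type_synonym ('c, 'v) ctx = "('v \<times> ('c, 'v) trm) list"

text \<open>Infinitary PTS presentation (cofinite quantification over fresh names).\<close>
inductive ctx_ok :: "('v \<Rightarrow> nat) \<Rightarrow> (nat \<Rightarrow> 'v) \<Rightarrow> (nat list \<Rightarrow> nat) \<Rightarrow>
      ('c \<Rightarrow> 'c \<Rightarrow> bool) \<Rightarrow> ('c \<Rightarrow> 'c \<Rightarrow> 'c \<Rightarrow> bool) \<Rightarrow> ('c, 'v) ctx \<Rightarrow> bool"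
  and has_type :: "('v \<Rightarrow> nat) \<Rightarrow> (nat \<Rightarrow> 'v) \<Rightarrow> (nat list \<Rightarrow> nat) \<Rightarrow>
      ('c \<Rightarrow> 'c \<Rightarrow> bool) \<Rightarrow> ('c \<Rightarrow> 'c \<Rightarrow> 'c \<Rightarrow> bool) \<Rightarrow> ('c, 'v) ctx \<Rightarrow>
      ('c, 'v) trm \<Rightarrow> ('c, 'v) trm \<Rightarrow> bool"
  for enc dec chi Ax Rl where
  ok_nil: "ctx_ok enc dec chi Ax Rl []"
| ok_cons: "ctx_ok enc dec chi Ax Rl \<Gamma> \<Longrightarrow> has_type enc dec chi Ax Rl \<Gamma> A (Cst s) \<Longrightarrow>
            x \<notin> set (map fst \<Gamma>) \<Longrightarrow> ctx_ok enc dec chi Ax Rl ((x, A) # \<Gamma>)"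
| t_sort: "ctx_ok enc dec chi Ax Rl \<Gamma> \<Longrightarrow> Ax s1 s2 \<Longrightarrow>
           has_type enc dec chi Ax Rl \<Gamma> (Cst s1) (Cst s2)"
| t_var: "ctx_ok enc dec chi Ax Rl \<Gamma> \<Longrightarrow> (x, A) \<in> set \<Gamma> \<Longrightarrow>
          has_type enc dec chi Ax Rl \<Gamma> (Var x) A"
| t_prod: "Rl s1 s2 s3 \<Longrightarrow> has_type enc dec chi Ax Rl \<Gamma> A (Cst s1) \<Longrightarrow>
           (\<forall>y. y \<notin> set (map fst \<Gamma>) \<longrightarrow>
              has_type enc dec chi Ax Rl ((y, A) # \<Gamma>) (usubst enc dec chi B x (Var y)) (Cst s2)) \<Longrightarrow>
           has_type enc dec chi Ax Rl \<Gamma> (Pi x A B) (Cst s3)"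
| t_abs: "Rl s1 s2 s3 \<Longrightarrow> has_type enc dec chi Ax Rl \<Gamma> A (Cst s1) \<Longrightarrow>
          (\<forall>z. z \<notin> set (map fst \<Gamma>) \<longrightarrow>
             has_type enc dec chi Ax Rl ((z, A) # \<Gamma>) (usubst enc dec chi B y (Var z)) (Cst s2)) \<Longrightarrow>
          (\<forall>z. z \<notin> set (map fst \<Gamma>) \<longrightarrow>
             has_type enc dec chi Ax Rl ((z, A) # \<Gamma>) (usubst enc dec chi M x (Var z))
                 (usubst enc dec chi B y (Var z))) \<Longrightarrow>
          has_type enc dec chi Ax Rl \<Gamma> (Lam x A M) (Pi y A B)"
| t_app: "has_type enc dec chi Ax Rl \<Gamma> M (Pi x A B) \<Longrightarrow> has_type enc dec chi Ax Rl \<Gamma> N A \<Longrightarrow>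
          has_type enc dec chi Ax Rl \<Gamma> (usubst enc dec chi B x N) (Cst s) \<Longrightarrow>
          has_type enc dec chi Ax Rl \<Gamma> (App M N) (usubst enc dec chi B x N)"
| t_conv: "has_type enc dec chi Ax Rl \<Gamma> M A \<Longrightarrow> betaconv enc dec chi A B \<Longrightarrow>
           has_type enc dec chi Ax Rl \<Gamma> B (Cst s) \<Longrightarrow> has_type enc dec chi Ax Rl \<Gamma> M B"

inductive ctx_ok_s :: "('v \<Rightarrow> nat) \<Rightarrow> (nat \<Rightarrow> 'v) \<Rightarrow> (nat list \<Rightarrow> nat) \<Rightarrow>
      ('c \<Rightarrow> 'c \<Rightarrow> bool) \<Rightarrow> ('c \<Rightarrow> 'c \<Rightarrow> 'c \<Rightarrow> bool) \<Rightarrow> ('c, 'v) ctx \<Rightarrow> bool"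
  and has_type_s :: "('v \<Rightarrow> nat) \<Rightarrow> (nat \<Rightarrow> 'v) \<Rightarrow> (nat list \<Rightarrow> nat) \<Rightarrow>
      ('c \<Rightarrow> 'c \<Rightarrow> bool) \<Rightarrow> ('c \<Rightarrow> 'c \<Rightarrow> 'c \<Rightarrow> bool) \<Rightarrow> ('c, 'v) ctx \<Rightarrow>
      ('c, 'v) trm \<Rightarrow> ('c, 'v) trm \<Rightarrow> bool"
  for enc dec chi Ax Rl where
  oks_nil: "ctx_ok_s enc dec chi Ax Rl []"
| oks_cons: "ctx_ok_s enc dec chi Ax Rl \<Gamma> \<Longrightarrow> has_type_s enc dec chi Ax Rl \<Gamma> A (Cst s) \<Longrightarrow>
            x \<notin> set (map fst \<Gamma>) \<Longrightarrow> ctx_ok_s enc dec chi Ax Rl ((x, A) # \<Gamma>)"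
| ts_sort: "ctx_ok_s enc dec chi Ax Rl \<Gamma> \<Longrightarrow> Ax s1 s2 \<Longrightarrow>
           has_type_s enc dec chi Ax Rl \<Gamma> (Cst s1) (Cst s2)"
| ts_var: "ctx_ok_s enc dec chi Ax Rl \<Gamma> \<Longrightarrow> (x, A) \<in> set \<Gamma> \<Longrightarrow>
          has_type_s enc dec chi Ax Rl \<Gamma> (Var x) A"
| ts_prod: "Rl s1 s2 s3 \<Longrightarrow> y \<notin> set (removeAll x (fv B)) \<Longrightarrow>
           has_type_s enc dec chi Ax Rl \<Gamma> A (Cst s1) \<Longrightarrow>
           has_type_s enc dec chi Ax Rl ((y, A) # \<Gamma>) (usubst enc dec chi B x (Var y)) (Cst s2) \<Longrightarrow>
           has_type_s enc dec chi Ax Rl \<Gamma> (Pi x A B) (Cst s3)"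
| ts_abs: "Rl s1 s2 s3 \<Longrightarrow> z \<notin> set (removeAll x (fv M)) \<Longrightarrow> z \<notin> set (removeAll y (fv B)) \<Longrightarrow>
          has_type_s enc dec chi Ax Rl \<Gamma> A (Cst s1) \<Longrightarrow>
          has_type_s enc dec chi Ax Rl ((z, A) # \<Gamma>) (usubst enc dec chi B y (Var z)) (Cst s2) \<Longrightarrow>
          has_type_s enc dec chi Ax Rl ((z, A) # \<Gamma>) (usubst enc dec chi M x (Var z))
                 (usubst enc dec chi B y (Var z)) \<Longrightarrow>
          has_type_s enc dec chi Ax Rl \<Gamma> (Lam x A M) (Pi y A B)"
| ts_app: "has_type_s enc dec chi Ax Rl \<Gamma> M (Pi x A B) \<Longrightarrow> has_type_s enc dec chi Ax Rl \<Gamma> N A \<Longrightarrow>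
          has_type_s enc dec chi Ax Rl \<Gamma> (App M N) (usubst enc dec chi B x N)"
| ts_conv: "has_type_s enc dec chi Ax Rl \<Gamma> M A \<Longrightarrow> betaconv enc dec chi A B \<Longrightarrow>
           has_type_s enc dec chi Ax Rl \<Gamma> B (Cst s) \<Longrightarrow> has_type_s enc dec chi Ax Rl \<Gamma> M B"

end

theory Submission
  imports Defs
begin

(* A finitary derivation checks the body of a binder for one fresh name y, the infinitary rules
   for every fresh name z. The gap is closed by the substitution lemma of the infinitary system,
   applied to the renaming y := z. Since M \<bullet> \<sigma> chooses its own names for bound variables, that
   lemma needs typing to be invariant under renaming of bound variables. This is handled through
   the canonical representative M \<bullet> Var, which is alpha-convertible to M and shared by
   alpha-convertible terms: typing is preserved when subject, type and context entries are replaced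
   by terms with the same representative. The premise of the infinitary (app) rule that B[x:=N] is
   sorted comes from correctness of types, generation for Pi, and the substitution lemma again. *)

lemma supd_eq_fun_upd [simp]: "supd = fun_upd"
  by (intro ext) (simp add: supd_def)

lemma removeAll_concat_map_upd:
  assumes "\<forall>w \<in> set (removeAll x ws). y \<notin> set (fv (\<sigma> w))"
  shows "removeAll y (concat (map (\<lambda>w. fv (if w = x then Var y else \<sigma> w)) ws))
           = concat (map (\<lambda>w. fv (\<sigma> w)) (removeAll x ws))"
  using assms by (induction ws) auto

lemma concat_concat: "concat (concat xss) = concat (map concat xss)"
  by (induction xss) auto

lemma equivclp_image:
  assumes "equivclp r a b" and "\<And>a b. r a b \<Longrightarrow> equivclp s (f a) (f b)"
  shows "equivclp s (f a) (f b)"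
  using assms(1)
proof (induction rule: equivclp_induct)
  case (step b c)
  then show ?case
    using assms(2) by (meson equivclp_sym equivclp_trans)
qed simp

section \<open>Substitution\<close>

locale name_supply =
  fixes enc :: "'v \<Rightarrow> nat" and dec :: "nat \<Rightarrow> 'v" and chi :: "nat list \<Rightarrow> nat"
  assumes enc_dec: "\<And>n. enc (dec n) = n"
    and chi_fresh: "\<And>ns. chi ns \<notin> set ns"
begin

abbreviation apply_subst :: "('c, 'v) trm \<Rightarrow> ('v \<Rightarrow> ('c, 'v) trm) \<Rightarrow> ('c, 'v) trm" (infixl "\<bullet>" 75)
  where "M \<bullet> \<sigma> \<equiv> sact enc dec chi M \<sigma>"

abbreviation subst_single :: "('c, 'v) trm \<Rightarrow> 'v \<Rightarrow> ('c, 'v) trm \<Rightarrow> ('c, 'v) trm"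
    ("_\<lbrace>_ := _\<rbrace>" [1000, 0, 0] 1000)
  where "M\<lbrace>x := N\<rbrace> \<equiv> usubst enc dec chi M x N"

(* \<iota> M renames every binder of M canonically; it serves as the representative of the alpha-class
   of M. *)
abbreviation iota :: "('c, 'v) trm \<Rightarrow> ('c, 'v) trm" ("\<iota>")
  where "\<iota> M \<equiv> M \<bullet> Var"

abbreviation binder_name :: "('v \<Rightarrow> ('c, 'v) trm) \<Rightarrow> 'v \<Rightarrow> ('c, 'v) trm \<Rightarrow> 'v"
  where "binder_name \<sigma> x M \<equiv> Xs enc dec chi \<sigma> (removeAll x (fv M))"

abbreviation sact_body :: "('v \<Rightarrow> ('c, 'v) trm) \<Rightarrow> 'v \<Rightarrow> ('c, 'v) trm \<Rightarrow> ('c, 'v) trm \<Rightarrow> ('c, 'v) trm"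
  where "sact_body \<sigma> x M N \<equiv> (M \<bullet> \<sigma>(x := Var (binder_name \<sigma> x M)))\<lbrace>binder_name \<sigma> x M := N\<rbrace>"

lemma usubst_eq: "M\<lbrace>x := N\<rbrace> = M \<bullet> Var(x := N)"
  by (simp add: usubst_def)

lemma usubst_Cst [simp]: "(Cst k)\<lbrace>x := N\<rbrace> = Cst k"
  by (simp add: usubst_eq)

lemma sact_Lam_eq: "y = binder_name \<sigma> x M \<Longrightarrow> Lam x A M \<bullet> \<sigma> = Lam y (A \<bullet> \<sigma>) (M \<bullet> \<sigma>(x := Var y))"
  by (simp add: Let_def)

lemma sact_Pi_eq: "y = binder_name \<sigma> x M \<Longrightarrow> Pi x A M \<bullet> \<sigma> = Pi y (A \<bullet> \<sigma>) (M \<bullet> \<sigma>(x := Var y))"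
  by (simp add: Let_def)

lemma Xp_notin: "Xp enc dec chi xs \<notin> set xs"
proof
  assume "Xp enc dec chi xs \<in> set xs"
  then have "chi (map enc xs) \<in> set (map enc xs)"
    unfolding Xp_def using enc_dec by (metis image_eqI list.set_map)
  then show False using chi_fresh by blast
qed

lemma ex_fresh: "\<exists>y. y \<notin> set (ys :: 'v list)"
  using Xp_notin by blast

lemma Xs_notin_fv: "w \<in> set ws \<Longrightarrow> Xs enc dec chi \<sigma> ws \<notin> set (fv (\<sigma> w))"
  using Xp_notin[of "concat (map (\<lambda>y. fv (\<sigma> y)) ws)"] by (auto simp: Xs_def)

lemma concat_map_fv_Var [simp]: "concat (map (\<lambda>y. fv (Var y :: ('c, 'v) trm)) ws) = ws"
  by (induction ws) auto

lemma Xs_Var: "Xs enc dec chi Var ws = Xp enc dec chi ws"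
  by (simp add: Xs_def)

lemma fv_sact: "fv (M \<bullet> \<sigma>) = concat (map (\<lambda>y. fv (\<sigma> y)) (fv M))"
  by (induction M arbitrary: \<sigma>)
    (simp_all add: Let_def removeAll_concat_map_upd Xs_notin_fv)

lemma Xs_cong: "(\<And>w. w \<in> set ws \<Longrightarrow> \<sigma> w = \<sigma>' w) \<Longrightarrow> Xs enc dec chi \<sigma> ws = Xs enc dec chi \<sigma>' ws"
  unfolding Xs_def by (metis (mono_tags, lifting) map_eq_conv)

lemma sact_cong: "(\<And>w. w \<in> set (fv M) \<Longrightarrow> \<sigma> w = \<sigma>' w) \<Longrightarrow> M \<bullet> \<sigma> = M \<bullet> \<sigma>'"
proof (induction M arbitrary: \<sigma> \<sigma>')
  case (Lam x A M)
  have "binder_name \<sigma> x M = binder_name \<sigma>' x M"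
    using Lam.prems by (intro Xs_cong) simp
  moreover have "A \<bullet> \<sigma> = A \<bullet> \<sigma>'" "M \<bullet> \<sigma>(x := y) = M \<bullet> \<sigma>'(x := y)" for y
    using Lam.prems by (auto intro!: Lam.IH)
  ultimately show ?case by (simp only: sact.simps Let_def supd_eq_fun_upd)
next
  case (Pi x A M)
  have "binder_name \<sigma> x M = binder_name \<sigma>' x M"
    using Pi.prems by (intro Xs_cong) simp
  moreover have "A \<bullet> \<sigma> = A \<bullet> \<sigma>'" "M \<bullet> \<sigma>(x := y) = M \<bullet> \<sigma>'(x := y)" for y
    using Pi.prems by (auto intro!: Pi.IH)
  ultimately show ?case by (simp only: sact.simps Let_def supd_eq_fun_upd)
next
  case (App M N)
  have "M \<bullet> \<sigma> = M \<bullet> \<sigma>'" "N \<bullet> \<sigma> = N \<bullet> \<sigma>'"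
    using App.prems by (auto intro!: App.IH)
  then show ?case by simp
qed simp_all

lemma sact_upd_fresh: "y \<notin> set (fv M) \<Longrightarrow> M \<bullet> \<sigma>(y := N) = M \<bullet> \<sigma>"
  by (rule sact_cong) auto

lemma removeAll_binder_name_fv:
  "removeAll (binder_name \<sigma> x M) (fv (M \<bullet> \<sigma>(x := Var (binder_name \<sigma> x M))))
     = concat (map (\<lambda>w. fv (\<sigma> w)) (removeAll x (fv M)))"
  by (simp add: fv_sact removeAll_concat_map_upd Xs_notin_fv)

lemma binder_name_sact:
  "binder_name \<tau> (binder_name \<sigma> x M) (M \<bullet> \<sigma>(x := Var (binder_name \<sigma> x M)))
     = binder_name (\<lambda>w. \<sigma> w \<bullet> \<tau>) x M"
  unfolding removeAll_binder_name_fv by (simp add: Xs_def fv_sact map_concat concat_concat comp_def)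

lemma sact_sact_body:
  assumes IH: "\<And>\<sigma> \<tau>. M \<bullet> \<sigma> \<bullet> \<tau> = M \<bullet> (\<lambda>w. \<sigma> w \<bullet> \<tau>)"
    and y: "y = binder_name \<sigma> x M"
  shows "M \<bullet> \<sigma>(x := Var y) \<bullet> \<tau>(y := N) = M \<bullet> (\<lambda>w. \<sigma> w \<bullet> \<tau>)(x := N)"
  unfolding IH
proof (rule sact_cong)
  fix w assume "w \<in> set (fv M)"
  then have "w \<noteq> x \<Longrightarrow> y \<notin> set (fv (\<sigma> w))"
    unfolding y by (intro Xs_notin_fv) simp
  then show "(\<sigma>(x := Var y)) w \<bullet> \<tau>(y := N) = ((\<lambda>w. \<sigma> w \<bullet> \<tau>)(x := N)) w"
    by (simp add: sact_upd_fresh)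
qed

lemma sact_sact: "M \<bullet> \<sigma> \<bullet> \<tau> = M \<bullet> (\<lambda>w. \<sigma> w \<bullet> \<tau>)"
proof (induction M arbitrary: \<sigma> \<tau>)
  case (Lam x A M)
  define y where "y = binder_name \<sigma> x M"
  define y' where "y' = binder_name (\<lambda>w. \<sigma> w \<bullet> \<tau>) x M"
  have "binder_name \<tau> y (M \<bullet> \<sigma>(x := Var y)) = y'"
    unfolding y_def y'_def by (rule binder_name_sact)
  then show ?case
    using sact_sact_body[OF Lam.IH(2) y_def, of \<tau> "Var y'"]
    by (simp add: Let_def Lam.IH(1) flip: y_def y'_def)
next
  case (Pi x A M)
  define y where "y = binder_name \<sigma> x M"
  define y' where "y' = binder_name (\<lambda>w. \<sigma> w \<bullet> \<tau>) x M"
  have "binder_name \<tau> y (M \<bullet> \<sigma>(x := Var y)) = y'"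
    unfolding y_def y'_def by (rule binder_name_sact)
  then show ?case
    using sact_sact_body[OF Pi.IH(2) y_def, of \<tau> "Var y'"]
    by (simp add: Let_def Pi.IH(1) flip: y_def y'_def)
qed simp_all

lemma iota_sact [simp]: "\<iota> M \<bullet> \<sigma> = M \<bullet> \<sigma>"
  by (simp add: sact_sact)

lemma iota_sact_eq: "\<iota> (M \<bullet> \<sigma>) = M \<bullet> (\<lambda>w. \<iota> (\<sigma> w))"
  by (rule sact_sact)

lemma sact_rename:
  "y \<notin> set (removeAll x (fv M)) \<Longrightarrow> M\<lbrace>x := Var y\<rbrace> \<bullet> \<sigma>(y := N) = M \<bullet> \<sigma>(x := N)"
  unfolding usubst_eq sact_sact by (rule sact_cong) auto

lemma usubst_rename:
  "y \<notin> set (removeAll x (fv M)) \<Longrightarrow> M\<lbrace>x := Var y\<rbrace>\<lbrace>y := N\<rbrace> = M\<lbrace>x := N\<rbrace>"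
  unfolding usubst_eq by (rule sact_rename[unfolded usubst_eq])

lemma usubst_sact_upd:
  assumes "\<forall>w \<in> set (removeAll x (fv M)). y \<notin> set (fv (\<sigma> w))"
  shows "(M \<bullet> \<sigma>(x := Var y))\<lbrace>y := N\<rbrace> = M \<bullet> (\<lambda>w. \<iota> (\<sigma> w))(x := N)"
  unfolding usubst_eq sact_sact using assms by (intro sact_cong) (auto simp: sact_upd_fresh)

lemma usubst_sact_binder:
  assumes "y = binder_name \<sigma> x M" and "set (fv M') \<subseteq> set (fv M)"
  shows "(M' \<bullet> \<sigma>(x := Var y))\<lbrace>y := N\<rbrace> = M' \<bullet> (\<lambda>w. \<iota> (\<sigma> w))(x := N)"
  using assms Xs_notin_fv[of _ "removeAll x (fv M)" \<sigma>] by (intro usubst_sact_upd) auto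

lemma sact_usubst_binder:
  "y \<notin> set (removeAll x (fv B)) \<Longrightarrow> B\<lbrace>x := Var y\<rbrace> \<bullet> (\<lambda>w. \<iota> (\<sigma> w))(y := Var z) = sact_body \<sigma> x B (Var z)"
  by (simp add: sact_rename usubst_sact_binder)

lemma iota_usubst_sact: "\<iota> (M\<lbrace>x := N\<rbrace> \<bullet> \<sigma>) = M \<bullet> (\<lambda>w. \<iota> (\<sigma> w))(x := \<iota> (N \<bullet> \<sigma>))"
  unfolding iota_sact_eq usubst_eq sact_sact by (rule sact_cong) simp

lemma iota_usubst_binder: "\<iota> (sact_body \<sigma> x M (N \<bullet> \<sigma>)) = \<iota> (M\<lbrace>x := N\<rbrace> \<bullet> \<sigma>)"
proof -
  have "\<iota> (sact_body \<sigma> x M (N \<bullet> \<sigma>)) = M \<bullet> (\<lambda>w. \<iota> (((\<lambda>w. \<iota> (\<sigma> w))(x := N \<bullet> \<sigma>)) w))"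
    by (simp only: usubst_sact_binder[OF refl order_refl] iota_sact_eq)
  also have "\<dots> = \<iota> (M\<lbrace>x := N\<rbrace> \<bullet> \<sigma>)"
    unfolding iota_usubst_sact by (rule sact_cong) simp
  finally show ?thesis .
qed

lemma usubst_iota [simp]: "(\<iota> M)\<lbrace>x := N\<rbrace> = M\<lbrace>x := N\<rbrace>"
  by (simp add: usubst_eq)

lemma iota_usubst_cong: "\<iota> N = \<iota> N' \<Longrightarrow> \<iota> (M\<lbrace>x := N\<rbrace>) = \<iota> (M\<lbrace>x := N'\<rbrace>)"
  unfolding usubst_eq iota_sact_eq by (rule sact_cong) simp

lemma removeAll_fv_rename:
  "y \<notin> set (removeAll x (fv M)) \<Longrightarrow> removeAll y (fv (M\<lbrace>x := Var y\<rbrace>)) = removeAll x (fv M)"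
  using removeAll_concat_map_upd[of x "fv M" y Var] by (auto simp: usubst_eq fv_sact)

lemma fv_subset_if_usubst_Var_subset:
  assumes "set (fv (M\<lbrace>x := Var y\<rbrace>)) \<subseteq> insert y S" and "y \<notin> set (fv M)"
  shows "set (fv M) - {x} \<subseteq> S"
proof -
  have "removeAll y (fv (M\<lbrace>x := Var y\<rbrace>)) = removeAll x (fv M)"
    using assms(2) by (simp add: removeAll_fv_rename)
  then show ?thesis
    using assms(1) by (metis Diff_subset_conv insert_is_Un set_removeAll)
qed

lemma usubst_Var_eq_iff:
  assumes "u \<notin> set (removeAll x (fv M))" and "u \<notin> set (removeAll x' (fv M'))"
  shows "(\<forall>z. M\<lbrace>x := Var z\<rbrace> = M'\<lbrace>x' := Var z\<rbrace>) \<longleftrightarrow> M\<lbrace>x := Var u\<rbrace> = M'\<lbrace>x' := Var u\<rbrace>"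
  using assms by (metis usubst_rename)

lemma removeAll_fv_eq_if_usubst_Var_eq:
  assumes "\<forall>z. M\<lbrace>x := Var z\<rbrace> = M'\<lbrace>x' := Var z\<rbrace>"
  shows "removeAll x (fv M) = removeAll x' (fv M')"
proof -
  obtain z where "z \<notin> set (fv M @ fv M')"
    using ex_fresh by blast
  then show ?thesis
    using assms removeAll_fv_rename[of z x M] removeAll_fv_rename[of z x' M'] by simp
qed

lemma iota_Lam:
  "\<iota> (Lam x A M) = (let u = Xp enc dec chi (removeAll x (fv M)) in Lam u (\<iota> A) (M\<lbrace>x := Var u\<rbrace>))"
  by (simp add: Let_def Xs_Var usubst_eq)

lemma iota_Pi:
  "\<iota> (Pi x A M) = (let u = Xp enc dec chi (removeAll x (fv M)) in Pi u (\<iota> A) (M\<lbrace>x := Var u\<rbrace>))"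
  by (simp add: Let_def Xs_Var usubst_eq)

lemma iota_Lam_eq_iff:
  "\<iota> (Lam x A M) = \<iota> (Lam x' A' M') \<longleftrightarrow> \<iota> A = \<iota> A' \<and> (\<forall>z. M\<lbrace>x := Var z\<rbrace> = M'\<lbrace>x' := Var z\<rbrace>)"
  using usubst_Var_eq_iff Xp_notin removeAll_fv_eq_if_usubst_Var_eq
  unfolding iota_Lam Let_def trm.inject by metis

lemma iota_Pi_eq_iff:
  "\<iota> (Pi x A M) = \<iota> (Pi x' A' M') \<longleftrightarrow> \<iota> A = \<iota> A' \<and> (\<forall>z. M\<lbrace>x := Var z\<rbrace> = M'\<lbrace>x' := Var z\<rbrace>)"
  using usubst_Var_eq_iff Xp_notin removeAll_fv_eq_if_usubst_Var_eq
  unfolding iota_Pi Let_def trm.inject by metis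

lemma iota_eq_Cst: "\<iota> M = Cst k \<Longrightarrow> M = Cst k"
  by (cases M) (auto simp: Let_def)

lemma iota_eq_Var: "\<iota> M = Var x \<Longrightarrow> M = Var x"
  by (cases M) (auto simp: Let_def)

lemma iota_eq_AppE:
  assumes "\<iota> M' = \<iota> (App M N)"
  obtains M1 N1 where "M' = App M1 N1" "\<iota> M1 = \<iota> M" "\<iota> N1 = \<iota> N"
  using assms by (cases M') (auto simp: Let_def)

lemma iota_eq_LamE:
  assumes "\<iota> M' = \<iota> (Lam x A M)"
  obtains x' A' M1 where "M' = Lam x' A' M1"
  using assms by (cases M') (auto simp: Let_def)

lemma iota_eq_PiE:
  assumes "\<iota> M' = \<iota> (Pi x A M)"
  obtains x' A' M1 where "M' = Pi x' A' M1"
  using assms by (cases M') (auto simp: Let_def)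

section \<open>Alpha- and beta-conversion\<close>

lemma alpha_iota: "alpha enc dec chi M (\<iota> M)"
proof (induction M)
  case (Lam x A M)
  let ?u = "Xp enc dec chi (removeAll x (fv M))"
  have "?u \<notin> set (removeAll x (fv M))"
    by (rule Xp_notin)
  then show ?case
    unfolding iota_Lam Let_def by (intro a_lam[where y = ?u] Lam.IH) (simp_all add: usubst_rename)
next
  case (Pi x A M)
  let ?u = "Xp enc dec chi (removeAll x (fv M))"
  have "?u \<notin> set (removeAll x (fv M))"
    by (rule Xp_notin)
  then show ?case
    unfolding iota_Pi Let_def by (intro a_pi[where y = ?u] Pi.IH) (simp_all add: usubst_rename)
qed (simp_all add: alpha.intros)

lemma alpha_imp_iota_eq: "alpha enc dec chi M N \<Longrightarrow> \<iota> M = \<iota> N"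
proof (induction rule: alpha.induct)
  case (a_lam A A' y x M x' M')
  then show ?case unfolding iota_Lam_eq_iff using usubst_Var_eq_iff by blast
next
  case (a_pi A A' y x M x' M')
  then show ?case unfolding iota_Pi_eq_iff using usubst_Var_eq_iff by blast
qed simp_all

lemma betaconv_if_iota_eq:
  assumes "\<iota> M = \<iota> N"
  shows "betaconv enc dec chi M N"
proof -
  have "equivclp (sup (alpha enc dec chi) (beta enc dec chi)) M (\<iota> M)"
    and "equivclp (sup (alpha enc dec chi) (beta enc dec chi)) N (\<iota> N)"
    using alpha_iota by blast+
  then show ?thesis
    unfolding betaconv_def using assms by (metis equivclp_sym equivclp_trans)
qed

lemma beta_fv: "beta enc dec chi M N \<Longrightarrow> set (fv N) \<subseteq> set (fv M)"
  by (induction rule: beta.induct) (auto simp: usubst_eq fv_sact split: if_splits)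

lemma usubst_Var_binder_iota:
  assumes "y = binder_name \<sigma> x M" and "set (fv M') \<subseteq> set (fv M)" and "\<iota> P = \<iota> (M' \<bullet> \<sigma>(x := Var y))"
  shows "P\<lbrace>y := Var z\<rbrace> = sact_body \<sigma> x M' (Var z)"
proof -
  have "P\<lbrace>y := Var z\<rbrace> = (M' \<bullet> \<sigma>(x := Var y))\<lbrace>y := Var z\<rbrace>"
    by (metis assms(3) usubst_iota)
  also have "\<dots> = M' \<bullet> (\<lambda>w. \<iota> (\<sigma> w))(x := Var z)"
    using assms(1,2) by (rule usubst_sact_binder)
  also have "\<dots> = sact_body \<sigma> x M' (Var z)"
    by (rule usubst_sact_binder[OF refl order_refl, symmetric])
  finally show ?thesis .
qed

lemma beta_sact: "beta enc dec chi M N \<Longrightarrow> \<exists>P. beta enc dec chi (M \<bullet> \<sigma>) P \<and> \<iota> P = \<iota> (N \<bullet> \<sigma>)"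
proof (induction arbitrary: \<sigma> rule: beta.induct)
  case (b_contr x A M N)
  let ?y = "binder_name \<sigma> x M"
  have "beta enc dec chi (App (Lam x A M) N \<bullet> \<sigma>) ((M \<bullet> \<sigma>(x := Var ?y))\<lbrace>?y := N \<bullet> \<sigma>\<rbrace>)"
    by (simp add: Let_def beta.b_contr)
  then show ?case
    using iota_usubst_binder by blast
next
  case (b_lam_body M M' x A)
  define y where "y = binder_name \<sigma> x M"
  obtain P where P: "beta enc dec chi (M \<bullet> \<sigma>(x := Var y)) P" "\<iota> P = \<iota> (M' \<bullet> \<sigma>(x := Var y))"
    using b_lam_body.IH by blast
  have "P\<lbrace>y := Var z\<rbrace> = sact_body \<sigma> x M' (Var z)" for z
    using y_def beta_fv[OF b_lam_body.hyps] P(2) by (rule usubst_Var_binder_iota)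
  then have "\<iota> (Lam y (A \<bullet> \<sigma>) P) = \<iota> (Lam x A M' \<bullet> \<sigma>)"
    unfolding sact_Lam_eq[OF refl, of x A M'] iota_Lam_eq_iff by simp
  then show ?case
    using P(1) sact_Lam_eq[OF y_def] by (auto intro: beta.b_lam_body)
next
  case (b_pi_body M M' x A)
  define y where "y = binder_name \<sigma> x M"
  obtain P where P: "beta enc dec chi (M \<bullet> \<sigma>(x := Var y)) P" "\<iota> P = \<iota> (M' \<bullet> \<sigma>(x := Var y))"
    using b_pi_body.IH by blast
  have "P\<lbrace>y := Var z\<rbrace> = sact_body \<sigma> x M' (Var z)" for z
    using y_def beta_fv[OF b_pi_body.hyps] P(2) by (rule usubst_Var_binder_iota)
  then have "\<iota> (Pi y (A \<bullet> \<sigma>) P) = \<iota> (Pi x A M' \<bullet> \<sigma>)"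
    unfolding sact_Pi_eq[OF refl, of x A M'] iota_Pi_eq_iff by simp
  then show ?case
    using P(1) sact_Pi_eq[OF y_def] by (auto intro: beta.b_pi_body)
next
  case (b_lam_ty A A' x M)
  obtain P where "beta enc dec chi (A \<bullet> \<sigma>) P" "\<iota> P = \<iota> (A' \<bullet> \<sigma>)"
    using b_lam_ty.IH by blast
  then show ?case
    by (auto simp: Let_def iota_Lam_eq_iff intro: beta.b_lam_ty)
next
  case (b_pi_ty A A' x M)
  obtain P where "beta enc dec chi (A \<bullet> \<sigma>) P" "\<iota> P = \<iota> (A' \<bullet> \<sigma>)"
    using b_pi_ty.IH by blast
  then show ?case
    by (auto simp: Let_def iota_Pi_eq_iff intro: beta.b_pi_ty)
next
  case (b_app_l M N P)
  then show ?case by (fastforce intro: beta.b_app_l)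
next
  case (b_app_r M N P)
  then show ?case by (fastforce intro: beta.b_app_r)
qed

lemma betaconv_sact:
  fixes \<sigma> :: "'v \<Rightarrow> ('c, 'v) trm"
  shows "betaconv enc dec chi A B \<Longrightarrow> betaconv enc dec chi (A \<bullet> \<sigma>) (B \<bullet> \<sigma>)"
  unfolding betaconv_def
proof (erule equivclp_image[where f = "\<lambda>M. M \<bullet> \<sigma>"])
  fix M N :: "('c, 'v) trm"
  assume "sup (alpha enc dec chi) (beta enc dec chi) M N"
  then show "equivclp (sup (alpha enc dec chi) (beta enc dec chi)) (M \<bullet> \<sigma>) (N \<bullet> \<sigma>)"
  proof
    assume "alpha enc dec chi M N"
    then have "\<iota> M \<bullet> \<sigma> = \<iota> N \<bullet> \<sigma>"
      by (simp only: alpha_imp_iota_eq)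
    then show ?thesis by simp
  next
    assume "beta enc dec chi M N"
    then obtain P where "beta enc dec chi (M \<bullet> \<sigma>) P" "\<iota> P = \<iota> (N \<bullet> \<sigma>)"
      using beta_sact by blast
    then show ?thesis
      using betaconv_if_iota_eq unfolding betaconv_def by (blast intro: equivclp_trans)
  qed
qed

end

section \<open>Typing in the infinitary system\<close>

lemmas has_type_induct[consumes 1, case_names sort var prod abs app conv] =
  ctx_ok_has_type.inducts(2)[where ?P1.0 = "\<lambda>_. True",
    simplified True_implies_equals implies_True_equals triv_forall_equality]

locale pts = name_supply enc dec chi
  for enc :: "'v \<Rightarrow> nat" and dec :: "nat \<Rightarrow> 'v" and chi :: "nat list \<Rightarrow> nat" +
  fixes Ax :: "'c \<Rightarrow> 'c \<Rightarrow> bool" and Rl :: "'c \<Rightarrow> 'c \<Rightarrow> 'c \<Rightarrow> bool"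
begin

abbreviation ok :: "('c, 'v) ctx \<Rightarrow> bool"
  where "ok \<Gamma> \<equiv> ctx_ok enc dec chi Ax Rl \<Gamma>"

abbreviation typed :: "('c, 'v) ctx \<Rightarrow> ('c, 'v) trm \<Rightarrow> ('c, 'v) trm \<Rightarrow> bool"
    ("_ \<turnstile> _ \<Colon> _" [50, 50, 50] 50)
  where "\<Gamma> \<turnstile> M \<Colon> A \<equiv> has_type enc dec chi Ax Rl \<Gamma> M A"

lemma typed_ok: "\<Gamma> \<turnstile> M \<Colon> A \<Longrightarrow> ok \<Gamma>"
  by (induction rule: has_type_induct) auto

lemma ok_ConsD:
  assumes "ok ((x, A) # \<Gamma>)"
  shows "ok \<Gamma>" and "x \<notin> set (map fst \<Gamma>)" and "\<exists>s. \<Gamma> \<turnstile> A \<Colon> Cst s"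
  using assms by (cases rule: ctx_ok.cases; blast)+

lemma weakening: "\<Gamma> \<turnstile> M \<Colon> A \<Longrightarrow> ok \<Delta> \<Longrightarrow> set \<Gamma> \<subseteq> set \<Delta> \<Longrightarrow> \<Delta> \<turnstile> M \<Colon> A"
proof (induction arbitrary: \<Delta> rule: has_type_induct)
  case (prod s1 s2 s3 \<Gamma> A B x)
  have A: "\<Delta> \<turnstile> A \<Colon> Cst s1"
    using prod by blast
  show ?case
  proof (rule t_prod[OF prod(1) A], intro allI impI)
    fix y assume "y \<notin> set (map fst \<Delta>)"
    then show "(y, A) # \<Delta> \<turnstile> B\<lbrace>x := Var y\<rbrace> \<Colon> Cst s2"
      using prod.IH(2) prod.prems ok_cons[OF prod.prems(1) A] by fastforce
  qed
next
  case (abs s1 s2 s3 \<Gamma> A B y M x)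
  have A: "\<Delta> \<turnstile> A \<Colon> Cst s1"
    using abs by blast
  show ?case
  proof (rule t_abs[OF abs(1) A]; intro allI impI)
    fix z assume z: "z \<notin> set (map fst \<Delta>)"
    then show "(z, A) # \<Delta> \<turnstile> B\<lbrace>y := Var z\<rbrace> \<Colon> Cst s2"
      using abs.IH(2) abs.prems ok_cons[OF abs.prems(1) A] by fastforce
    show "(z, A) # \<Delta> \<turnstile> M\<lbrace>x := Var z\<rbrace> \<Colon> B\<lbrace>y := Var z\<rbrace>"
      using z abs.IH(3) abs.prems ok_cons[OF abs.prems(1) A] by fastforce
  qed
next
  case (app \<Gamma> M x A B N s)
  then show ?case by (blast intro: t_app)
qed (auto intro: ctx_ok_has_type.intros)

lemma weakening_Cons: "\<Gamma> \<turnstile> M \<Colon> A \<Longrightarrow> ok ((z, B) # \<Gamma>) \<Longrightarrow> (z, B) # \<Gamma> \<turnstile> M \<Colon> A"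
  by (erule weakening) auto

lemma ok_entry_sorted: "ok \<Gamma> \<Longrightarrow> (x, D) \<in> set \<Gamma> \<Longrightarrow> \<exists>s. \<Gamma> \<turnstile> D \<Colon> Cst s"
proof (induction \<Gamma>)
  case (Cons p \<Gamma>)
  obtain y A where p: "p = (y, A)"
    by fastforce
  show ?case
    using Cons ok_ConsD[of y A \<Gamma>] weakening_Cons[of \<Gamma> _ _ y A] unfolding p by auto
qed simp

lemma typed_fv: "\<Gamma> \<turnstile> M \<Colon> A \<Longrightarrow> set (fv M) \<subseteq> set (map fst \<Gamma>)"
proof (induction rule: has_type_induct)
  case (var \<Gamma> x A)
  then show ?case by force
next
  case (prod s1 s2 s3 \<Gamma> A B x)
  obtain y where "y \<notin> set (map fst \<Gamma> @ fv B)"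
    using ex_fresh by blast
  then have "set (fv B) - {x} \<subseteq> set (map fst \<Gamma>)"
    using prod.IH(2) by (intro fv_subset_if_usubst_Var_subset) auto
  then show ?case
    using prod.IH(1) by auto
next
  case (abs s1 s2 s3 \<Gamma> A B y M x)
  obtain z where "z \<notin> set (map fst \<Gamma> @ fv M)"
    using ex_fresh by blast
  then have "set (fv M) - {x} \<subseteq> set (map fst \<Gamma>)"
    using abs.IH(3) by (intro fv_subset_if_usubst_Var_subset) auto
  then show ?case
    using abs.IH(1) by auto
qed auto

lemma ok_entry_fv: "ok \<Gamma> \<Longrightarrow> (x, D) \<in> set \<Gamma> \<Longrightarrow> set (fv D) \<subseteq> set (map fst \<Gamma>)"
  using ok_entry_sorted typed_fv by blast

lemma type_sorted: "\<Gamma> \<turnstile> M \<Colon> A \<Longrightarrow> (\<exists>s. A = Cst s) \<or> (\<exists>s. \<Gamma> \<turnstile> A \<Colon> Cst s)"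
proof (induction rule: has_type_induct)
  case (var \<Gamma> x A)
  then show ?case using ok_entry_sorted by blast
next
  case (abs s1 s2 s3 \<Gamma> A B y M x)
  then have "\<Gamma> \<turnstile> Pi y A B \<Colon> Cst s3"
    by (blast intro: t_prod)
  then show ?case by blast
qed auto

subsection \<open>Invariance under alpha-conversion\<close>

abbreviation iota_ctx :: "('c, 'v) ctx \<Rightarrow> ('c, 'v) ctx"
  where "iota_ctx \<Gamma> \<equiv> map (apsnd \<iota>) \<Gamma>"

lemma dom_iota_ctx [simp]: "map fst (iota_ctx \<Gamma>) = map fst \<Gamma>"
  by (induction \<Gamma>) auto

lemma dom_eq_if_iota_ctx_eq: "iota_ctx \<Gamma>' = iota_ctx \<Gamma> \<Longrightarrow> map fst \<Gamma>' = map fst \<Gamma>"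
  by (metis dom_iota_ctx)

lemma iota_ctx_ConsE:
  assumes "iota_ctx \<Gamma>' = iota_ctx ((x, A) # \<Gamma>)"
  obtains A' \<Gamma>'' where "\<Gamma>' = (x, A') # \<Gamma>''" "\<iota> A' = \<iota> A" "iota_ctx \<Gamma>'' = iota_ctx \<Gamma>"
  using assms by (cases \<Gamma>') auto

lemma iota_ctx_memE:
  assumes "iota_ctx \<Gamma>' = iota_ctx \<Gamma>" and "(x, A) \<in> set \<Gamma>"
  obtains A' where "(x, A') \<in> set \<Gamma>'" "\<iota> A' = \<iota> A"
proof -
  have "(x, \<iota> A) \<in> set (iota_ctx \<Gamma>')"
    using assms by force
  then show ?thesis
    using that by auto
qed

(* The type is kept fixed, invariance in the type follows
   from correctness of types (typed_iota); the entries of \<Gamma> must stay sorted in \<Gamma>' because the (var)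
   case converts the type of the variable back to the original one. *)
definition iota_stable_ctx :: "('c, 'v) ctx \<Rightarrow> bool" where
  "iota_stable_ctx \<Gamma> \<longleftrightarrow>
     (\<forall>\<Gamma>'. iota_ctx \<Gamma>' = iota_ctx \<Gamma> \<longrightarrow> ok \<Gamma>' \<and> (\<forall>(x, D) \<in> set \<Gamma>. \<exists>s. \<Gamma>' \<turnstile> D \<Colon> Cst s))"

definition iota_stable :: "('c, 'v) ctx \<Rightarrow> ('c, 'v) trm \<Rightarrow> ('c, 'v) trm \<Rightarrow> bool" where
  "iota_stable \<Gamma> M A \<longleftrightarrow> (\<forall>\<Gamma>' M'. iota_ctx \<Gamma>' = iota_ctx \<Gamma> \<longrightarrow> \<iota> M' = \<iota> M \<longrightarrow> \<Gamma>' \<turnstile> M' \<Colon> A)"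

lemma iota_stable_ctx_Nil: "iota_stable_ctx []"
  by (simp add: iota_stable_ctx_def ctx_ok_has_type.ok_nil)

lemma iota_stable_ctx_Cons:
  assumes \<Gamma>: "iota_stable_ctx \<Gamma>" and A: "iota_stable \<Gamma> A (Cst s)" and x: "x \<notin> set (map fst \<Gamma>)"
  shows "iota_stable_ctx ((x, A) # \<Gamma>)"
  unfolding iota_stable_ctx_def
proof (intro allI impI)
  fix \<Gamma>' assume "iota_ctx \<Gamma>' = iota_ctx ((x, A) # \<Gamma>)"
  then obtain A' \<Gamma>'' where \<Gamma>': "\<Gamma>' = (x, A') # \<Gamma>''" "\<iota> A' = \<iota> A" "iota_ctx \<Gamma>'' = iota_ctx \<Gamma>"
    by (rule iota_ctx_ConsE)
  have "ok \<Gamma>''" and entries: "\<forall>(y, D) \<in> set \<Gamma>. \<exists>s. \<Gamma>'' \<turnstile> D \<Colon> Cst s"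
    using \<Gamma> \<Gamma>'(3) unfolding iota_stable_ctx_def by blast+
  moreover have "\<Gamma>'' \<turnstile> A' \<Colon> Cst s" and "\<Gamma>'' \<turnstile> A \<Colon> Cst s"
    using A \<Gamma>'(2,3) unfolding iota_stable_def by blast+
  moreover have "x \<notin> set (map fst \<Gamma>'')"
    using x dom_eq_if_iota_ctx_eq[OF \<Gamma>'(3)] by simp
  ultimately have "ok \<Gamma>'" and "\<Gamma>' \<turnstile> A \<Colon> Cst s"
    unfolding \<Gamma>'(1) by (blast intro: ok_cons weakening_Cons)+
  moreover have "\<forall>(y, D) \<in> set \<Gamma>. \<exists>s. \<Gamma>' \<turnstile> D \<Colon> Cst s"
    using entries \<open>ok \<Gamma>'\<close> unfolding \<Gamma>'(1) by (blast intro: weakening_Cons)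
  ultimately show "ok \<Gamma>' \<and> (\<forall>(y, D) \<in> set ((x, A) # \<Gamma>). \<exists>s. \<Gamma>' \<turnstile> D \<Colon> Cst s)"
    by auto
qed

lemma iota_stable_sort: "iota_stable_ctx \<Gamma> \<Longrightarrow> Ax s1 s2 \<Longrightarrow> iota_stable \<Gamma> (Cst s1) (Cst s2)"
  unfolding iota_stable_ctx_def iota_stable_def by (auto dest: iota_eq_Cst intro: t_sort)

lemma iota_stable_var:
  assumes \<Gamma>: "iota_stable_ctx \<Gamma>" and x: "(x, A) \<in> set \<Gamma>"
  shows "iota_stable \<Gamma> (Var x) A"
  unfolding iota_stable_def
proof (intro allI impI)
  fix \<Gamma>' and M' :: "('c, 'v) trm"
  assume \<Gamma>': "iota_ctx \<Gamma>' = iota_ctx \<Gamma>" and "\<iota> M' = \<iota> (Var x)"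
  then have M': "M' = Var x"
    by (simp add: iota_eq_Var)
  obtain A' where A': "(x, A') \<in> set \<Gamma>'" "\<iota> A' = \<iota> A"
    using \<Gamma>' x by (rule iota_ctx_memE)
  obtain s where "\<Gamma>' \<turnstile> A \<Colon> Cst s" and "ok \<Gamma>'"
    using \<Gamma> \<Gamma>' x unfolding iota_stable_ctx_def by blast
  then show "\<Gamma>' \<turnstile> M' \<Colon> A"
    unfolding M' using A' by (blast intro: t_var t_conv betaconv_if_iota_eq)
qed

lemma iota_stable_prod:
  assumes "Rl s1 s2 s3" and A: "iota_stable \<Gamma> A (Cst s1)"
    and B: "\<And>y. y \<notin> set (map fst \<Gamma>) \<Longrightarrow> iota_stable ((y, A) # \<Gamma>) (B\<lbrace>x := Var y\<rbrace>) (Cst s2)"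
  shows "iota_stable \<Gamma> (Pi x A B) (Cst s3)"
  unfolding iota_stable_def
proof (intro allI impI)
  fix \<Gamma>' M' assume \<Gamma>': "iota_ctx \<Gamma>' = iota_ctx \<Gamma>" and M': "\<iota> M' = \<iota> (Pi x A B)"
  obtain x' A' B' where M'_eq: "M' = Pi x' A' B'"
    using M' by (rule iota_eq_PiE)
  then have A': "\<iota> A' = \<iota> A" and B': "\<And>z. B'\<lbrace>x' := Var z\<rbrace> = B\<lbrace>x := Var z\<rbrace>"
    using M' by (simp_all only: iota_Pi_eq_iff)
  have "\<Gamma>' \<turnstile> A' \<Colon> Cst s1"
    using A \<Gamma>' A' unfolding iota_stable_def by blast
  moreover have "(z, A') # \<Gamma>' \<turnstile> B'\<lbrace>x' := Var z\<rbrace> \<Colon> Cst s2" if "z \<notin> set (map fst \<Gamma>')" for z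
    using B[of z] that dom_eq_if_iota_ctx_eq[OF \<Gamma>'] \<Gamma>' A' unfolding B' iota_stable_def by auto
  ultimately show "\<Gamma>' \<turnstile> M' \<Colon> Cst s3"
    unfolding M'_eq using assms(1) by (blast intro: t_prod)
qed

lemma iota_stable_abs:
  assumes "Rl s1 s2 s3" and A: "iota_stable \<Gamma> A (Cst s1)"
    and B: "\<And>z. z \<notin> set (map fst \<Gamma>) \<Longrightarrow> iota_stable ((z, A) # \<Gamma>) (B\<lbrace>y := Var z\<rbrace>) (Cst s2)"
    and M: "\<And>z. z \<notin> set (map fst \<Gamma>) \<Longrightarrow> iota_stable ((z, A) # \<Gamma>) (M\<lbrace>x := Var z\<rbrace>) (B\<lbrace>y := Var z\<rbrace>)"
  shows "iota_stable \<Gamma> (Lam x A M) (Pi y A B)"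
  unfolding iota_stable_def
proof (intro allI impI)
  fix \<Gamma>' M' assume \<Gamma>': "iota_ctx \<Gamma>' = iota_ctx \<Gamma>" and M': "\<iota> M' = \<iota> (Lam x A M)"
  obtain x' A' M1 where M'_eq: "M' = Lam x' A' M1"
    using M' by (rule iota_eq_LamE)
  then have A': "\<iota> A' = \<iota> A" and M1: "\<And>z. M1\<lbrace>x' := Var z\<rbrace> = M\<lbrace>x := Var z\<rbrace>"
    using M' by (simp_all only: iota_Lam_eq_iff)
  have ctx: "iota_ctx ((z, A'') # \<Gamma>') = iota_ctx ((z, A) # \<Gamma>)" if "\<iota> A'' = \<iota> A" for z A''
    using that \<Gamma>' by simp
  have dom: "z \<notin> set (map fst \<Gamma>)" if "z \<notin> set (map fst \<Gamma>')" for z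
    using that dom_eq_if_iota_ctx_eq[OF \<Gamma>'] by simp
  have "\<Gamma>' \<turnstile> A'' \<Colon> Cst s1" if "\<iota> A'' = \<iota> A" for A''
    using A \<Gamma>' that unfolding iota_stable_def by blast
  moreover have "(z, A'') # \<Gamma>' \<turnstile> B\<lbrace>y := Var z\<rbrace> \<Colon> Cst s2"
    if "\<iota> A'' = \<iota> A" "z \<notin> set (map fst \<Gamma>')" for z A''
    using B[OF dom[OF that(2)]] ctx[OF that(1)] unfolding iota_stable_def by blast
  moreover have "(z, A') # \<Gamma>' \<turnstile> M1\<lbrace>x' := Var z\<rbrace> \<Colon> B\<lbrace>y := Var z\<rbrace>"
    if "z \<notin> set (map fst \<Gamma>')" for z
    using M[OF dom[OF that]] ctx[OF A'] unfolding M1 iota_stable_def by blast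
  ultimately have "\<Gamma>' \<turnstile> Lam x' A' M1 \<Colon> Pi y A' B" and "\<Gamma>' \<turnstile> Pi y A B \<Colon> Cst s3"
    using assms(1) A' by (blast intro: t_abs t_prod)+
  moreover have "\<iota> (Pi y A' B) = \<iota> (Pi y A B)"
    using A' by (simp add: iota_Pi_eq_iff)
  ultimately show "\<Gamma>' \<turnstile> M' \<Colon> Pi y A B"
    unfolding M'_eq by (blast intro: t_conv betaconv_if_iota_eq)
qed

lemma iota_stable_app:
  assumes M: "iota_stable \<Gamma> M (Pi x A B)" and N: "iota_stable \<Gamma> N A"
    and B: "iota_stable \<Gamma> (B\<lbrace>x := N\<rbrace>) (Cst s)"
  shows "iota_stable \<Gamma> (App M N) (B\<lbrace>x := N\<rbrace>)"
  unfolding iota_stable_def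
proof (intro allI impI)
  fix \<Gamma>' M' assume \<Gamma>': "iota_ctx \<Gamma>' = iota_ctx \<Gamma>" and M': "\<iota> M' = \<iota> (App M N)"
  obtain M1 N1 where M'_eq: "M' = App M1 N1" and "\<iota> M1 = \<iota> M" "\<iota> N1 = \<iota> N"
    using M' by (rule iota_eq_AppE)
  moreover have B_eq: "\<iota> (B\<lbrace>x := N1\<rbrace>) = \<iota> (B\<lbrace>x := N\<rbrace>)"
    using \<open>\<iota> N1 = \<iota> N\<close> by (rule iota_usubst_cong)
  ultimately have "\<Gamma>' \<turnstile> App M1 N1 \<Colon> B\<lbrace>x := N1\<rbrace>" and "\<Gamma>' \<turnstile> B\<lbrace>x := N\<rbrace> \<Colon> Cst s"
    using M N B \<Gamma>' unfolding iota_stable_def by (blast intro: t_app)+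
  then show "\<Gamma>' \<turnstile> M' \<Colon> B\<lbrace>x := N\<rbrace>"
    unfolding M'_eq using B_eq by (blast intro: t_conv betaconv_if_iota_eq)
qed

lemma iota_stable_conv:
  "iota_stable \<Gamma> M A \<Longrightarrow> betaconv enc dec chi A B \<Longrightarrow> iota_stable \<Gamma> B (Cst s) \<Longrightarrow> iota_stable \<Gamma> M B"
  unfolding iota_stable_def by (blast intro: t_conv)

lemma typing_iota_stable:
  shows "ok \<Gamma> \<Longrightarrow> iota_stable_ctx \<Gamma>" and "\<Gamma> \<turnstile> M \<Colon> A \<Longrightarrow> iota_stable \<Gamma> M A"
proof (induction rule: ctx_ok_has_type.inducts)
  case ok_nil
  show ?case by (rule iota_stable_ctx_Nil)
next
  case (ok_cons \<Gamma> A s x)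
  show ?case by (rule iota_stable_ctx_Cons[OF ok_cons(2,4,5)])
next
  case (t_sort \<Gamma> s1 s2)
  show ?case by (rule iota_stable_sort[OF t_sort(2,3)])
next
  case (t_var \<Gamma> x A)
  show ?case by (rule iota_stable_var[OF t_var(2,3)])
next
  case (t_prod s1 s2 s3 \<Gamma> A B x)
  show ?case by (rule iota_stable_prod[OF t_prod(1,3)]) (use t_prod(4) in blast)
next
  case (t_abs s1 s2 s3 \<Gamma> A B y M x)
  show ?case by (rule iota_stable_abs[OF t_abs(1,3)]) (use t_abs(4,5) in blast)+
next
  case (t_app \<Gamma> M x A B N s)
  show ?case by (rule iota_stable_app[OF t_app(2,4,6)])
next
  case (t_conv \<Gamma> M A B s)
  show ?case by (rule iota_stable_conv[OF t_conv(2,3,5)])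
qed

lemma typed_iota:
  assumes "\<Gamma> \<turnstile> M \<Colon> A" and "\<iota> M' = \<iota> M" and "\<iota> A' = \<iota> A"
  shows "\<Gamma> \<turnstile> M' \<Colon> A'"
proof -
  have subject: "\<Gamma> \<turnstile> K' \<Colon> C" if "\<Gamma> \<turnstile> K \<Colon> C" "\<iota> K' = \<iota> K" for K K' C
    using typing_iota_stable(2)[OF that(1)] that(2) unfolding iota_stable_def by blast
  have M': "\<Gamma> \<turnstile> M' \<Colon> A"
    using assms(1,2) by (rule subject)
  from type_sorted[OF assms(1)] show ?thesis
  proof
    assume "\<exists>s. A = Cst s"
    then have "A' = A"
      using assms(3) by (auto intro: iota_eq_Cst)
    with M' show ?thesis
      by simp
  next
    assume "\<exists>s. \<Gamma> \<turnstile> A \<Colon> Cst s"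
    then obtain s where "\<Gamma> \<turnstile> A' \<Colon> Cst s"
      using subject assms(3) by blast
    moreover have "betaconv enc dec chi A A'"
      using assms(3) by (simp add: betaconv_if_iota_eq)
    ultimately show ?thesis
      using M' by (blast intro: t_conv)
  qed
qed

subsection \<open>Substitution lemma\<close>

definition wt_subst :: "('c, 'v) ctx \<Rightarrow> ('v \<Rightarrow> ('c, 'v) trm) \<Rightarrow> ('c, 'v) ctx \<Rightarrow> bool" where
  "wt_subst \<Delta> \<sigma> \<Gamma> \<longleftrightarrow> (\<forall>(w, D) \<in> set \<Gamma>. \<Delta> \<turnstile> \<sigma> w \<Colon> D \<bullet> \<sigma>)"

lemma wt_subst_Cons:
  assumes \<sigma>: "wt_subst \<Delta> \<sigma> \<Gamma>" and \<Delta>': "ok ((z, A \<bullet> \<sigma>) # \<Delta>)"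
    and \<Gamma>: "ok \<Gamma>" and A: "\<Gamma> \<turnstile> A \<Colon> Cst s" and y: "y \<notin> set (map fst \<Gamma>)"
  shows "wt_subst ((z, A \<bullet> \<sigma>) # \<Delta>) ((\<lambda>w. \<iota> (\<sigma> w))(y := Var z)) ((y, A) # \<Gamma>)"
  unfolding wt_subst_def
proof (intro ballI, clarify)
  fix w D assume wD: "(w, D) \<in> set ((y, A) # \<Gamma>)"
  show "(z, A \<bullet> \<sigma>) # \<Delta> \<turnstile> ((\<lambda>w. \<iota> (\<sigma> w))(y := Var z)) w \<Colon> D \<bullet> (\<lambda>w. \<iota> (\<sigma> w))(y := Var z)"
  proof (cases "w = y")
    case True
    then have "D = A"
      using wD y by force
    moreover have "y \<notin> set (fv A)"
      using typed_fv[OF A] y by blast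
    moreover have "(z, A \<bullet> \<sigma>) # \<Delta> \<turnstile> Var z \<Colon> A \<bullet> \<sigma>"
      using \<Delta>' by (rule t_var) simp
    then have "(z, A \<bullet> \<sigma>) # \<Delta> \<turnstile> Var z \<Colon> A \<bullet> (\<lambda>w. \<iota> (\<sigma> w))"
      by (rule typed_iota) (simp_all add: sact_sact)
    ultimately show ?thesis
      using True by (simp add: sact_upd_fresh)
  next
    case False
    then have "(w, D) \<in> set \<Gamma>"
      using wD by simp
    then have "y \<notin> set (fv D)" and "\<Delta> \<turnstile> \<sigma> w \<Colon> D \<bullet> \<sigma>"
      using ok_entry_fv[OF \<Gamma>] y \<sigma> unfolding wt_subst_def by blast+
    have "(z, A \<bullet> \<sigma>) # \<Delta> \<turnstile> \<iota> (\<sigma> w) \<Colon> D \<bullet> (\<lambda>w. \<iota> (\<sigma> w))"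
      by (rule typed_iota[OF weakening_Cons[OF \<open>\<Delta> \<turnstile> \<sigma> w \<Colon> D \<bullet> \<sigma>\<close> \<Delta>']])
        (simp_all add: iota_sact_eq)
    then show ?thesis
      using False \<open>y \<notin> set (fv D)\<close> by (simp add: sact_upd_fresh)
  qed
qed

(* sact_body \<sigma> x M (Var z) is the body M renamed to some fresh y and then sent through
   (\<iota> \<circ> \<sigma>)(y := Var z) (sact_usubst_binder), so the induction hypothesis for the body applies. *)
lemma wt_subst_body:
  assumes IH: "\<And>\<sigma>' \<Delta>'. ok \<Delta>' \<Longrightarrow> wt_subst \<Delta>' \<sigma>' ((y, A) # \<Gamma>) \<Longrightarrow>
                 \<Delta>' \<turnstile> M\<lbrace>x := Var y\<rbrace> \<bullet> \<sigma>' \<Colon> C\<lbrace>x0 := Var y\<rbrace> \<bullet> \<sigma>'"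
    and \<sigma>: "wt_subst \<Delta> \<sigma> \<Gamma>" and \<Delta>: "ok \<Delta>" and A\<sigma>: "\<Delta> \<turnstile> A \<bullet> \<sigma> \<Colon> Cst s'"
    and A: "\<Gamma> \<turnstile> A \<Colon> Cst s" and y: "y \<notin> set (map fst \<Gamma>)"
    and yM: "y \<notin> set (removeAll x (fv M))" and yC: "y \<notin> set (removeAll x0 (fv C))"
    and z: "z \<notin> set (map fst \<Delta>)"
  shows "(z, A \<bullet> \<sigma>) # \<Delta> \<turnstile> sact_body \<sigma> x M (Var z) \<Colon> sact_body \<sigma> x0 C (Var z)"
proof -
  have \<Delta>': "ok ((z, A \<bullet> \<sigma>) # \<Delta>)"
    using \<Delta> A\<sigma> z by (rule ok_cons)
  have "wt_subst ((z, A \<bullet> \<sigma>) # \<Delta>) ((\<lambda>w. \<iota> (\<sigma> w))(y := Var z)) ((y, A) # \<Gamma>)"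
    using \<sigma> \<Delta>' typed_ok[OF A] A y by (rule wt_subst_Cons)
  from IH[OF \<Delta>' this] show ?thesis
    by (simp only: sact_usubst_binder[OF yM] sact_usubst_binder[OF yC])
qed

lemma substitution:
  "\<Gamma> \<turnstile> M \<Colon> A \<Longrightarrow> ok \<Delta> \<Longrightarrow> wt_subst \<Delta> \<sigma> \<Gamma> \<Longrightarrow> \<Delta> \<turnstile> M \<bullet> \<sigma> \<Colon> A \<bullet> \<sigma>"
proof (induction arbitrary: \<Delta> \<sigma> rule: has_type_induct)
  case (sort \<Gamma> s1 s2)
  then show ?case by (simp add: t_sort)
next
  case (var \<Gamma> x A)
  then show ?case by (auto simp: wt_subst_def)
next
  case (prod s1 s2 s3 \<Gamma> A B x)
  have A\<sigma>: "\<Delta> \<turnstile> A \<bullet> \<sigma> \<Colon> Cst s1"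
    using prod.IH(1)[OF prod.prems] by simp
  obtain y where y: "y \<notin> set (map fst \<Gamma> @ fv B)"
    using ex_fresh by blast
  have "(z, A \<bullet> \<sigma>) # \<Delta> \<turnstile> sact_body \<sigma> x B (Var z) \<Colon> sact_body \<sigma> x (Cst s2) (Var z)"
    if "z \<notin> set (map fst \<Delta>)" for z
    using prod.IH(2) y by (intro wt_subst_body[OF _ prod.prems(2,1) A\<sigma> prod.hyps(2) _ _ _ that]) auto
  then have "\<Delta> \<turnstile> Pi x A B \<bullet> \<sigma> \<Colon> Cst s3"
    using prod.hyps(1) A\<sigma> by (auto simp: Let_def usubst_eq intro!: t_prod)
  then show ?case by simp
next
  case (abs s1 s2 s3 \<Gamma> A B y M x)
  have A\<sigma>: "\<Delta> \<turnstile> A \<bullet> \<sigma> \<Colon> Cst s1"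
    using abs.IH(1)[OF abs.prems] by simp
  obtain w where w: "w \<notin> set (map fst \<Gamma> @ fv B @ fv M)"
    using ex_fresh by blast
  have "(z, A \<bullet> \<sigma>) # \<Delta> \<turnstile> sact_body \<sigma> y B (Var z) \<Colon> sact_body \<sigma> y (Cst s2) (Var z)"
    if "z \<notin> set (map fst \<Delta>)" for z
    using abs.IH(2) w by (intro wt_subst_body[OF _ abs.prems(2,1) A\<sigma> abs.hyps(2) _ _ _ that]) auto
  moreover have "(z, A \<bullet> \<sigma>) # \<Delta> \<turnstile> sact_body \<sigma> x M (Var z) \<Colon> sact_body \<sigma> y B (Var z)"
    if "z \<notin> set (map fst \<Delta>)" for z
    using abs.IH(3) w by (intro wt_subst_body[OF _ abs.prems(2,1) A\<sigma> abs.hyps(2) _ _ _ that]) auto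
  ultimately have "\<Delta> \<turnstile> Lam x A M \<bullet> \<sigma> \<Colon> Pi y A B \<bullet> \<sigma>"
    using abs.hyps(1) A\<sigma> by (auto simp: Let_def usubst_eq intro!: t_abs)
  then show ?case by simp
next
  case (app \<Gamma> M x A B N s)
  let ?x' = "binder_name \<sigma> x B"
  let ?T = "sact_body \<sigma> x B (N \<bullet> \<sigma>)"
  have M: "\<Delta> \<turnstile> M \<bullet> \<sigma> \<Colon> Pi ?x' (A \<bullet> \<sigma>) (B \<bullet> \<sigma>(x := Var ?x'))"
    using app.IH(1)[OF app.prems] by (simp add: Let_def)
  have N: "\<Delta> \<turnstile> N \<bullet> \<sigma> \<Colon> A \<bullet> \<sigma>"
    using app.IH(2)[OF app.prems] .
  have T: "\<iota> ?T = \<iota> (B\<lbrace>x := N\<rbrace> \<bullet> \<sigma>)"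
    by (rule iota_usubst_binder)
  have "\<Delta> \<turnstile> ?T \<Colon> Cst s"
    using app.IH(3)[OF app.prems] T by (auto intro: typed_iota)
  with M N have "\<Delta> \<turnstile> App (M \<bullet> \<sigma>) (N \<bullet> \<sigma>) \<Colon> ?T"
    by (rule t_app)
  then show ?case
    using T by (auto intro: typed_iota)
next
  case (conv \<Gamma> M A B s)
  have "\<Delta> \<turnstile> B \<bullet> \<sigma> \<Colon> Cst s"
    using conv.IH(2)[OF conv.prems] by simp
  with conv.IH(1)[OF conv.prems] show ?case
    using betaconv_sact[OF conv.hyps(2)] by (blast intro: t_conv)
qed

lemma typed_usubst:
  assumes M: "(y, A) # \<Gamma> \<turnstile> M \<Colon> C" and \<Delta>: "ok \<Delta>" "set \<Gamma> \<subseteq> set \<Delta>" and N: "\<Delta> \<turnstile> N \<Colon> A"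
  shows "\<Delta> \<turnstile> M\<lbrace>y := N\<rbrace> \<Colon> C\<lbrace>y := N\<rbrace>"
proof -
  obtain s where \<Gamma>: "ok \<Gamma>" and y: "y \<notin> set (map fst \<Gamma>)" and A: "\<Gamma> \<turnstile> A \<Colon> Cst s"
    using ok_ConsD[OF typed_ok[OF M]] by blast
  have "\<Delta> \<turnstile> (Var(y := N)) w \<Colon> D\<lbrace>y := N\<rbrace>" if wD: "(w, D) \<in> set ((y, A) # \<Gamma>)" for w D
  proof (cases "w = y")
    case True
    then have "D = A"
      using wD y by force
    moreover have "y \<notin> set (fv A)"
      using typed_fv[OF A] y by blast
    then have "A\<lbrace>y := N\<rbrace> = \<iota> A"
      by (simp add: usubst_eq sact_upd_fresh)
    ultimately show ?thesis
      using True N by (auto intro: typed_iota)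
  next
    case False
    then have "(w, D) \<in> set \<Gamma>"
      using wD by simp
    moreover have "y \<notin> set (fv D)"
      using ok_entry_fv[OF \<Gamma> calculation] y by blast
    then have "D\<lbrace>y := N\<rbrace> = \<iota> D"
      by (simp add: usubst_eq sact_upd_fresh)
    moreover have "\<Delta> \<turnstile> Var w \<Colon> D"
      using \<Delta> calculation(1) by (auto intro: t_var)
    then have "\<Delta> \<turnstile> Var w \<Colon> \<iota> D"
      by (rule typed_iota) simp_all
    ultimately show ?thesis
      using False by simp
  qed
  then have "wt_subst \<Delta> (Var(y := N)) ((y, A) # \<Gamma>)"
    unfolding wt_subst_def usubst_eq by blast
  with M \<Delta>(1) show ?thesis
    unfolding usubst_eq by (rule substitution)
qed

lemma typed_rename:
  assumes "(y, A) # \<Gamma> \<turnstile> M \<Colon> C" and "ok ((z, A) # \<Gamma>)"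
  shows "(z, A) # \<Gamma> \<turnstile> M\<lbrace>y := Var z\<rbrace> \<Colon> C\<lbrace>y := Var z\<rbrace>"
proof -
  have "(z, A) # \<Gamma> \<turnstile> Var z \<Colon> A"
    using assms(2) by (rule t_var) simp
  then show ?thesis
    using assms by (auto intro: typed_usubst)
qed

lemma typed_Pi_body:
  assumes "\<Gamma> \<turnstile> Pi x A B \<Colon> C"
  shows "\<exists>s. \<forall>z. z \<notin> set (map fst \<Gamma>) \<longrightarrow> (z, A) # \<Gamma> \<turnstile> B\<lbrace>x := Var z\<rbrace> \<Colon> Cst s"
proof -
  have "P = Pi x A B \<Longrightarrow> \<exists>s. \<forall>z. z \<notin> set (map fst \<Gamma>) \<longrightarrow> (z, A) # \<Gamma> \<turnstile> B\<lbrace>x := Var z\<rbrace> \<Colon> Cst s"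
    if "\<Gamma> \<turnstile> P \<Colon> C" for P
    using that
  proof (induction arbitrary: x A B rule: has_type_induct)
    case (prod s1 s2 s3 \<Gamma> A' B' x')
    then show ?case by (intro exI[of _ s2]) auto
  qed auto
  then show ?thesis
    using assms by blast
qed

lemma app_type_sorted:
  assumes M: "\<Gamma> \<turnstile> M \<Colon> Pi x A B" and N: "\<Gamma> \<turnstile> N \<Colon> A"
  shows "\<exists>s. \<Gamma> \<turnstile> B\<lbrace>x := N\<rbrace> \<Colon> Cst s"
proof -
  obtain s where "\<Gamma> \<turnstile> Pi x A B \<Colon> Cst s"
    using type_sorted[OF M] by auto
  then obtain s2 where B: "\<And>z. z \<notin> set (map fst \<Gamma>) \<Longrightarrow> (z, A) # \<Gamma> \<turnstile> B\<lbrace>x := Var z\<rbrace> \<Colon> Cst s2"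
    using typed_Pi_body by blast
  obtain z where z: "z \<notin> set (map fst \<Gamma> @ fv B)"
    using ex_fresh by blast
  then have "\<Gamma> \<turnstile> B\<lbrace>x := Var z\<rbrace>\<lbrace>z := N\<rbrace> \<Colon> Cst s2"
    using B typed_usubst typed_ok[OF M] N by fastforce
  then show ?thesis
    using z by (auto simp: usubst_rename)
qed

lemma finitary_imp_infinitary:
  shows "ctx_ok_s enc dec chi Ax Rl \<Gamma> \<Longrightarrow> ok \<Gamma>"
    and "has_type_s enc dec chi Ax Rl \<Gamma> M A \<Longrightarrow> \<Gamma> \<turnstile> M \<Colon> A"
proof (induction rule: ctx_ok_s_has_type_s.inducts)
  case (ts_prod s1 s2 s3 y x B \<Gamma> A)
  have "(z, A) # \<Gamma> \<turnstile> B\<lbrace>x := Var z\<rbrace> \<Colon> Cst s2" if "z \<notin> set (map fst \<Gamma>)" for z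
  proof -
    have "ok ((z, A) # \<Gamma>)"
      using typed_ok[OF ts_prod(3)] ts_prod(3) that by (rule ok_cons)
    from typed_rename[OF ts_prod(5) this] show ?thesis
      using ts_prod(6) by (simp add: usubst_rename)
  qed
  then show ?case
    using ts_prod(1,3) by (blast intro: t_prod)
next
  case (ts_abs s1 s2 s3 z x M y B \<Gamma> A)
  have "(z', A) # \<Gamma> \<turnstile> B\<lbrace>y := Var z'\<rbrace> \<Colon> Cst s2 \<and> (z', A) # \<Gamma> \<turnstile> M\<lbrace>x := Var z'\<rbrace> \<Colon> B\<lbrace>y := Var z'\<rbrace>"
    if "z' \<notin> set (map fst \<Gamma>)" for z'
  proof -
    have "ok ((z', A) # \<Gamma>)"
      using typed_ok[OF ts_abs(3)] ts_abs(3) that by (rule ok_cons)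
    from typed_rename[OF ts_abs(5) this] typed_rename[OF ts_abs(7) this] show ?thesis
      using ts_abs(8,9) by (simp add: usubst_rename)
  qed
  then show ?case
    using ts_abs(1,3) by (blast intro: t_abs)
next
  case (ts_app \<Gamma> M x A B N)
  then show ?case
    using app_type_sorted by (blast intro: t_app)
qed (blast intro: ctx_ok_has_type.intros)+

end

theorem mainTheorem20:
  fixes enc :: "'v \<Rightarrow> nat" and dec :: "nat \<Rightarrow> 'v" and chi :: "nat list \<Rightarrow> nat"
    and Ax :: "'c \<Rightarrow> 'c \<Rightarrow> bool" and Rl :: "'c \<Rightarrow> 'c \<Rightarrow> 'c \<Rightarrow> bool"
  assumes enc_dec: "\<And>n. enc (dec n) = n"
    and chi_fresh: "\<And>ns. chi ns \<notin> set ns"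
  shows "(\<forall>\<Gamma>::('c, 'v) ctx. ctx_ok_s enc dec chi Ax Rl \<Gamma> \<longrightarrow> ctx_ok enc dec chi Ax Rl \<Gamma>)
       \<and> (\<forall>(\<Gamma>::('c, 'v) ctx) M A. has_type_s enc dec chi Ax Rl \<Gamma> M A \<longrightarrow> has_type enc dec chi Ax Rl \<Gamma> M A)"
proof -
  interpret pts enc dec chi Ax Rl
    by unfold_locales (fact enc_dec chi_fresh)+
  show ?thesis
    using finitary_imp_infinitary by blast
qed

end
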